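(* Let $n\in\mathbb{N}$. Then the number $N_n$ of distinct $n\times n$ principal reversible squares equals $1$ if and only if $n$ is prime.
   Context: A reversible square matrix is a real matrix $M=(M_{i,j})$ with indices $i,j\in\mathbb{Z}_n=\mathbb{Z}/n\mathbb{Z}$ (top-left entry index $(1,1)$, indices computed modulo $n$) such that (R) $M_{i,j}+M_{i,n+1-j}=M_{i,k}+M_{i,n+1-k}$ and $M_{i,j}+M_{n+1-i,j}=M_{k,j}+M_{n+1-k,j}$ for all $i,j,k$, and (V) $M_{i,j}+M_{k,l}=M_{i,l}+M_{k,j}$ for all $i,j,k,l$. An $n\times n$ principal reversible square is a reversible square matrix whose set of entries is exactly $\{1,\dots,n^2\}$, whose entries increase along each row and each column, and with $M_{1,1}=1$, $M_{1,2}=2$. *)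

theory Defs
  imports Complex_Main "HOL-Computational_Algebra.Primes"
begin

text \<open>An n x n real matrix is modelled as a function nat => nat => real whose
  entries at indices (i,j) with 1 <= i,j <= n are the matrix entries; all other
  values are required to be 0, so distinct matrices correspond to distinct functions.
  Indices are taken modulo n via the representative in 1..n.\<close>

definition idx :: "nat \<Rightarrow> nat \<Rightarrow> nat" where
  "idx n k = (k + n - 1) mod n + 1"

definition matrix_of_size :: "nat \<Rightarrow> (nat \<Rightarrow> nat \<Rightarrow> real) \<Rightarrow> bool" where
  "matrix_of_size n M \<longleftrightarrow>
     (\<forall>i j. i \<notin> {1..n} \<or> j \<notin> {1..n} \<longrightarrow> M i j = 0)"

definition reversible_square :: "nat \<Rightarrow> (nat \<Rightarrow> nat \<Rightarrow> real) \<Rightarrow> bool" where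
  "reversible_square n M \<longleftrightarrow> matrix_of_size n M \<and>
     (\<forall>i\<in>{1..n}. \<forall>j\<in>{1..n}. \<forall>k\<in>{1..n}.
        M i j + M i (n + 1 - j) = M i k + M i (n + 1 - k) \<and>
        M i j + M (n + 1 - i) j = M k j + M (n + 1 - k) j) \<and>
     (\<forall>i\<in>{1..n}. \<forall>j\<in>{1..n}. \<forall>k\<in>{1..n}. \<forall>l\<in>{1..n}.
        M i j + M k l = M i l + M k j)"

definition principal_reversible_square :: "nat \<Rightarrow> (nat \<Rightarrow> nat \<Rightarrow> real) \<Rightarrow> bool" where
  "principal_reversible_square n M \<longleftrightarrow> reversible_square n M \<and>
     {M i j | i j. i \<in> {1..n} \<and> j \<in> {1..n}} = real ` {1..n^2} \<and>
     (\<forall>i\<in>{1..n}. \<forall>j\<in>{1..n}. \<forall>j'\<in>{1..n}. j < j' \<longrightarrow> M i j < M i j') \<and>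
     (\<forall>j\<in>{1..n}. \<forall>i\<in>{1..n}. \<forall>i'\<in>{1..n}. i < i' \<longrightarrow> M i j < M i' j) \<and>
     M (idx n 1) (idx n 1) = 1 \<and> M (idx n 1) (idx n 2) = 2"

end

(*
  By (V) a principal square is additive, M i j = a i + b j + 1, with strictly increasing row
  offsets a and column offsets b starting at 0 and b 2 = 1. As its entries are 1, ..., n^2,
  every number below n^2 is uniquely a sum a + b: the offset sets A and B tile {0..<n^2}.

  If n = p q with p, q >= 2, the offsets a x = p x and b y = y mod p + p n (y div p) give a
  principal square different from the standard one, whose entries are (i - 1) n + j.

  If n is prime, let m be the least number missing from B. Then m lies in A, and by strong
  induction every aligned block {k m ..< k m + m} lies in a single translate a + B. Hence A
  consists of multiples of m and B is a union of such blocks, so m divides card B = n. Thus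
  m = n, B = {0..<n} and A = {0, n, ..., (n - 1) n}: the standard square is the only one.
*)
theory Submission
  imports Defs
begin

lemma dvd_le_if_less_add:
  fixes a c m :: nat
  assumes "m dvd a" "m dvd c" "a < c + m"
  shows "a \<le> c"
proof -
  obtain k j where "a = m * k" "c = m * j" using assms(1,2) by (elim dvdE)
  then have "m * k < m * Suc j" using assms(3) by simp
  then have "k \<le> j" by (simp only: mult_less_cancel1) simp
  then show ?thesis using \<open>a = m * k\<close> \<open>c = m * j\<close> by simp
qed

lemma round_down_dvd_add:
  fixes m x r :: nat
  assumes "m dvd x" "r < m"
  shows "(x + r) - (x + r) mod m = x"
  using assms by (elim dvdE) simp

lemma strict_mono_on_lessThan_self:
  fixes h :: "nat \<Rightarrow> nat"
  assumes "strict_mono_on {..<n} h" "h ` {..<n} \<subseteq> {..<n}" "x < n"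
  shows "h x = x"
proof -
  have climb: "h y + k \<le> h (y + k)" if "y + k < n" for y k
    using that
  proof (induction k)
    case (Suc k)
    then have "h (y + k) < h (y + Suc k)" using strict_mono_onD[OF assms(1)] by simp
    with Suc show ?case by simp
  qed simp
  have "x \<le> h x" using climb[of 0 x] \<open>x < n\<close> by simp
  moreover have "h x + (n - 1 - x) \<le> h (n - 1)" using climb[of x "n - 1 - x"] \<open>x < n\<close> by simp
  moreover have "h (n - 1) < n" using assms(2) \<open>x < n\<close> by (simp add: image_subset_iff)
  ultimately show ?thesis by linarith
qed

lemma strict_mono_on_lessThan_multiples:
  fixes f :: "nat \<Rightarrow> nat"
  assumes "strict_mono_on {..<n} f" "\<And>x. x < n \<Longrightarrow> n dvd f x" "\<And>x. x < n \<Longrightarrow> f x < n * n"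
    and "x < n"
  shows "f x = n * x"
proof -
  define h where "h x = f x div n" for x
  have f_h: "f x = n * h x" if "x < n" for x using assms(2)[OF that] by (simp add: h_def)
  have "strict_mono_on {..<n} h"
    using strict_mono_onD[OF assms(1)] f_h by (intro strict_mono_onI) (metis lessThan_iff mult_less_cancel1)
  moreover have "h ` {..<n} \<subseteq> {..<n}"
    using assms(3) f_h by (auto simp: image_subset_iff)
  ultimately show ?thesis using strict_mono_on_lessThan_self f_h \<open>x < n\<close> by metis
qed

lemma composite_nat_factors:
  fixes n :: nat
  assumes "2 \<le> n" "\<not> prime n"
  obtains p q where "n = p * q" "2 \<le> p" "2 \<le> q"
proof -
  obtain p where "p dvd n" "p \<noteq> 1" "p \<noteq> n" using assms by (auto simp: prime_nat_iff)
  obtain q where "n = p * q" using \<open>p dvd n\<close> by (rule dvdE)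
  have "n \<noteq> 0" using assms(1) by simp
  then have "p \<noteq> 0" "q \<noteq> 0" using \<open>n = p * q\<close> by auto
  moreover have "q \<noteq> 1" using \<open>p \<noteq> n\<close> \<open>n = p * q\<close> by auto
  ultimately show thesis using \<open>n = p * q\<close> \<open>p \<noteq> 1\<close> by (intro that) auto
qed

locale interval_tiling =
  fixes A B :: "nat set" and N :: nat
  assumes sum_bij: "bij_betw (\<lambda>(a, b). a + b) (A \<times> B) {..<N}" and nonempty: "0 < N"
begin

lemma sum_less: "a \<in> A \<Longrightarrow> b \<in> B \<Longrightarrow> a + b < N"
  using bij_betw_apply[OF sum_bij, of "(a, b)"] by simp

lemma sum_unique:
  assumes "a \<in> A" "b \<in> B" "a' \<in> A" "b' \<in> B" "a + b = a' + b'"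
  shows "a = a'"
proof -
  have "(a, b) = (a', b')"
    by (rule inj_onD[OF bij_betw_imp_inj_on[OF sum_bij]]) (use assms in auto)
  then show ?thesis by simp
qed

lemma sum_cover:
  assumes "t < N"
  obtains a b where "a \<in> A" "b \<in> B" "t = a + b"
proof -
  have "t \<in> (\<lambda>(a, b). a + b) ` (A \<times> B)"
    using assms bij_betw_imp_surj_on[OF sum_bij] by simp
  then obtain a b where "a \<in> A" "b \<in> B" "t = a + b" by auto
  then show ?thesis by (rule that)
qed

lemma zero_mem: "0 \<in> A" "0 \<in> B"
proof -
  obtain a b where "a \<in> A" "b \<in> B" "0 = a + b" using sum_cover[OF nonempty] .
  then show "0 \<in> A" "0 \<in> B" by simp_all
qed

definition tile :: "nat \<Rightarrow> nat" where
  "tile t = fst (the_inv_into (A \<times> B) (\<lambda>(a, b). a + b) t)"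

lemma tile_eq: "a \<in> A \<Longrightarrow> b \<in> B \<Longrightarrow> tile (a + b) = a"
  using the_inv_into_f_f[OF bij_betw_imp_inj_on[OF sum_bij], of "(a, b)"] by (simp add: tile_def)

lemma tile_mem:
  assumes "t < N"
  shows "tile t \<in> A" and "t - tile t \<in> B" and "tile t \<le> t"
proof -
  obtain a b where "a \<in> A" "b \<in> B" "t = a + b" using sum_cover[OF assms] .
  then show "tile t \<in> A" "t - tile t \<in> B" "tile t \<le> t" using tile_eq by auto
qed

end

lemma interval_tiling_image:
  assumes "bij_betw (\<lambda>(x, y). f x + g y) (X \<times> Y) {..<N}" "inj_on f X" "inj_on g Y" "0 < N"
  shows "interval_tiling (f ` X) (g ` Y) N"
proof (rule interval_tiling.intro)
  have "bij_betw (map_prod f g) (X \<times> Y) (f ` X \<times> g ` Y)"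
    using assms(2,3) by (intro bij_betw_map_prod) (simp_all add: inj_on_imp_bij_betw)
  moreover have "(\<lambda>(a, b). a + b) \<circ> map_prod f g = (\<lambda>(x, y). f x + g y)" by auto
  ultimately show "bij_betw (\<lambda>(a, b). a + b) (f ` X \<times> g ` Y) {..<N}"
    using assms(1) by (metis bij_betw_comp_iff)
qed (rule assms(4))

context interval_tiling
begin

context
  fixes m :: nat
  assumes below_gap: "{..<m} \<subseteq> B" and gap: "m \<notin> B" and gap_less: "m < N"
begin

lemma gap_pos: "0 < m"
  using zero_mem(2) gap by (cases m) auto

lemma gap_mem: "m \<in> A"
proof -
  obtain a b where ab: "a \<in> A" "b \<in> B" "m = a + b"
    using sum_cover[OF gap_less] .
  have "a \<notin> B" if "a < m"
  proof
    assume "a \<in> B"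
    then have "a = 0"
      using sum_unique[OF ab(1) zero_mem(2) zero_mem(1) \<open>a \<in> B\<close>] by simp
    then show False using ab gap by simp
  qed
  then have "\<not> a < m" using below_gap by auto
  then have "a = m" using ab(3) by simp
  then show ?thesis using ab(1) by simp
qed

lemma dvd_gap_if_blocks:
  assumes blocks: "\<And>s. s < T \<Longrightarrow> tile s = tile (s - s mod m)"
    and "a \<in> A" "a < T"
  shows "m dvd a"
proof -
  have "a < N" using sum_less[OF \<open>a \<in> A\<close> zero_mem(2)] by simp
  have "a = tile (a - a mod m)"
    using blocks[OF \<open>a < T\<close>] tile_eq[OF \<open>a \<in> A\<close> zero_mem(2)] by simp
  also have "\<dots> \<le> a - a mod m" using tile_mem(3) \<open>a < N\<close> by simp
  finally have "a mod m = 0" using mod_less_eq_dividend[of a m] by linarith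
  then show ?thesis by (simp add: dvd_eq_mod_eq_0)
qed

lemma mem_iff_if_blocks:
  assumes blocks: "\<And>s. s < T \<Longrightarrow> tile s = tile (s - s mod m)"
    and "b < T" "T \<le> N"
  shows "b \<in> B \<longleftrightarrow> b - b mod m \<in> B"
proof -
  have in_B: "s \<in> B \<longleftrightarrow> tile s = 0" if "s < N" for s
    using tile_eq[OF zero_mem(1), of s] tile_mem(2)[OF that] by auto
  show ?thesis
    using in_B[of b] in_B[of "b - b mod m"] blocks[OF \<open>b < T\<close>] assms(2,3) by simp
qed

lemma block_start_mem_B_not_mem_A:
  assumes "m dvd c" "0 < r" "r < m" "c \<in> B"
  shows "c + r \<notin> A"
proof
  assume "c + r \<in> A"
  show False
  proof (cases "c = 0")
    case True
    then have "r \<in> B" using below_gap \<open>r < m\<close> by auto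
    then have "r = 0"
      using sum_unique[OF \<open>c + r \<in> A\<close> zero_mem(2) zero_mem(1), of r] True by simp
    then show False using \<open>0 < r\<close> by simp
  next
    case False
    then have "m \<le> c" using \<open>m dvd c\<close> by (simp add: dvd_imp_le)
    have "m - r \<in> B" using below_gap \<open>0 < r\<close> \<open>r < m\<close> by auto
    have "m + c = (c + r) + (m - r)" using \<open>r < m\<close> by simp
    then have "m = c + r"
      using sum_unique[OF gap_mem \<open>c \<in> B\<close> \<open>c + r \<in> A\<close> \<open>m - r \<in> B\<close>] by simp
    then show False using \<open>m \<le> c\<close> \<open>0 < r\<close> by simp
  qed
qed

lemma mem_B_if_block_start_mem:
  assumes blocks: "\<And>s. s < c + r \<Longrightarrow> tile s = tile (s - s mod m)"
    and "c + r < N" "m dvd c" "0 < r" "r < m" "c \<in> B"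
  shows "c + r \<in> B"
proof -
  define a where "a = tile (c + r)"
  have a: "a \<in> A" "c + r - a \<in> B" "a \<le> c + r"
    using tile_mem \<open>c + r < N\<close> by (simp_all add: a_def)
  consider "a < c + r" | "a = c + r" using a(3) by linarith
  then show ?thesis
  proof cases
    case 1
    have "m dvd a" using dvd_gap_if_blocks[OF blocks a(1) 1] .
    then have "a \<le> c" using dvd_le_if_less_add[OF _ \<open>m dvd c\<close>] 1 \<open>r < m\<close> by simp
    have "a = 0"
    proof (rule ccontr)
      assume "a \<noteq> 0"
      have "m dvd c - a" using \<open>m dvd c\<close> \<open>m dvd a\<close> by simp
      then have "(c + r - a) - (c + r - a) mod m = c - a"
        using round_down_dvd_add[of m "c - a" r] \<open>r < m\<close> \<open>a \<le> c\<close> by simp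
      then have "c - a \<in> B"
        using mem_iff_if_blocks[where T = "c + r" and b = "c + r - a", OF blocks]
          a(2) \<open>a \<noteq> 0\<close> \<open>a \<le> c\<close> \<open>c + r < N\<close>
        by simp
      then show False
        using sum_unique[OF a(1) \<open>c - a \<in> B\<close> zero_mem(1) \<open>c \<in> B\<close>] \<open>a \<noteq> 0\<close> \<open>a \<le> c\<close>
        by simp
    qed
    then show ?thesis using a(2) by simp
  next
    case 2
    then show ?thesis
      using block_start_mem_B_not_mem_A \<open>m dvd c\<close> \<open>0 < r\<close> \<open>r < m\<close> \<open>c \<in> B\<close> a(1) by simp
  qed
qed

lemma tile_block_step:
  assumes blocks: "\<And>s. s < t \<Longrightarrow> tile s = tile (s - s mod m)" and "t < N"
  shows "tile t = tile (t - t mod m)"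
proof (cases "t mod m = 0")
  case True
  then show ?thesis by simp
next
  case False
  define r where "r = t mod m"
  define c where "c = t - r"
  have "r < m" using gap_pos by (simp add: r_def)
  have "r \<le> t" "0 < r" using False by (simp_all add: r_def)
  then have "t = c + r" "c < t" by (simp_all add: c_def)
  have "m dvd c" by (simp add: c_def r_def)
  define a where "a = tile c"
  have a: "a \<in> A" "c - a \<in> B" "a \<le> c"
    using tile_mem[of c] \<open>c < t\<close> \<open>t < N\<close> by (simp_all add: a_def)
  have "a < t" using a(3) \<open>c < t\<close> by linarith
  then have "m dvd a" using dvd_gap_if_blocks[where T = t, OF blocks a(1)] by simp
  have "t - a \<in> B"
  proof (cases "a = 0")
    case True
    then show ?thesis
      using mem_B_if_block_start_mem[OF blocks[unfolded \<open>t = c + r\<close>]] a(2)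
        \<open>t = c + r\<close> \<open>t < N\<close> \<open>m dvd c\<close> \<open>0 < r\<close> \<open>r < m\<close>
      by simp
  next
    case False
    have "m dvd c - a" using \<open>m dvd c\<close> \<open>m dvd a\<close> by simp
    then have "(t - a) - (t - a) mod m = c - a"
      using round_down_dvd_add[of m "c - a" r] \<open>r < m\<close> \<open>t = c + r\<close> a(3) by simp
    then show ?thesis
      using mem_iff_if_blocks[where T = t and b = "t - a", OF blocks] a(2,3) False \<open>c < t\<close> \<open>t < N\<close>
      by simp
  qed
  moreover have "a \<le> t" using a(3) \<open>c < t\<close> by simp
  ultimately have "tile t = a" using tile_eq[OF a(1), of "t - a"] by simp
  then show ?thesis by (simp add: a_def c_def r_def)
qed

lemma tile_block: "t < N \<Longrightarrow> tile t = tile (t - t mod m)"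
proof (induction t rule: less_induct)
  case (less t)
  show ?case
  proof (rule tile_block_step[OF _ less.prems])
    fix s assume "s < t"
    show "tile s = tile (s - s mod m)"
      by (rule less.IH[OF \<open>s < t\<close>]) (use \<open>s < t\<close> less.prems in linarith)
  qed
qed

lemma gap_dvd_mem_A: "a \<in> A \<Longrightarrow> m dvd a"
  using dvd_gap_if_blocks[OF tile_block] sum_less[OF _ zero_mem(2)] by simp

lemma mem_B_iff_round_down:
  assumes "b < N"
  shows "b \<in> B \<longleftrightarrow> b - b mod m \<in> B"
  using mem_iff_if_blocks[OF tile_block assms order_refl] .

lemma gap_dvd_card: "m dvd card B"
proof -
  define Z where "Z = {z \<in> B. m dvd z}"
  have "bij_betw (\<lambda>b. (b - b mod m, b mod m)) B (Z \<times> {..<m})"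
  proof (rule bij_betw_byWitness[where f' = "\<lambda>(z, s). z + s"])
    show "(\<lambda>b. (b - b mod m, b mod m)) ` B \<subseteq> Z \<times> {..<m}"
    proof (rule image_subsetI)
      fix b assume "b \<in> B"
      then have "b - b mod m \<in> B"
        using mem_B_iff_round_down[OF sum_less[OF zero_mem(1) \<open>b \<in> B\<close>]] by simp
      then show "(b - b mod m, b mod m) \<in> Z \<times> {..<m}"
        using gap_pos by (simp add: Z_def)
    qed
    show "(\<lambda>(z, s). z + s) ` (Z \<times> {..<m}) \<subseteq> B"
    proof clarify
      fix z s assume "z \<in> Z" "s < m"
      then have "z + s < N" using sum_less[OF gap_mem, of z] by (simp add: Z_def)
      moreover have "(z + s) - (z + s) mod m = z"
        using round_down_dvd_add \<open>z \<in> Z\<close> \<open>s < m\<close> by (simp add: Z_def)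
      ultimately show "z + s \<in> B"
        using mem_B_iff_round_down[OF \<open>z + s < N\<close>] \<open>z \<in> Z\<close> by (simp add: Z_def)
    qed
  qed (auto simp: Z_def)
  then have "card B = card Z * m" by (simp add: bij_betw_same_card card_cartesian_product)
  then show ?thesis by simp
qed

end

lemma finite_B: "finite B"
proof (rule finite_subset)
  show "B \<subseteq> {..<N}" using sum_less[OF zero_mem(1)] by auto
qed simp

theorem prime_card_tiling:
  assumes "prime (card B)" "1 \<in> B" "card B < N"
  shows "B = {..<card B}" and "a \<in> A \<Longrightarrow> card B dvd a"
proof -
  define m where "m = (LEAST x. x \<notin> B)"
  obtain x where "x \<notin> B" using ex_new_if_finite[OF infinite_UNIV_nat finite_B] by blast
  then have "m \<notin> B" unfolding m_def by (rule LeastI)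
  have "{..<m} \<subseteq> B"
  proof
    fix y assume "y \<in> {..<m}"
    then have "\<not> y \<notin> B" unfolding m_def by (intro not_less_Least) simp
    then show "y \<in> B" by simp
  qed
  then have "card {..<m} \<le> card B" by (rule card_mono[OF finite_B])
  then have "m \<le> card B" by simp
  then have "m < N" using assms(3) by linarith
  note least_gap = \<open>{..<m} \<subseteq> B\<close> \<open>m \<notin> B\<close> \<open>m < N\<close>
  have "m \<noteq> 1" using \<open>m \<notin> B\<close> \<open>1 \<in> B\<close> by auto
  then have "m = card B"
    using gap_dvd_card[OF least_gap] \<open>prime (card B)\<close> unfolding prime_nat_iff by blast
  then show "B = {..<card B}"
    using card_subset_eq[OF finite_B \<open>{..<m} \<subseteq> B\<close>] by simp
  show "a \<in> A \<Longrightarrow> card B dvd a" using gap_dvd_mem_A[OF least_gap] \<open>m = card B\<close> by simp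
qed

end

lemma idx_1: "idx n 1 = 1"
  by (simp add: idx_def)

lemma idx_2: "2 \<le> n \<Longrightarrow> idx n 2 = 2"
  by (simp add: idx_def mod_Suc)

lemma principal_squareD:
  assumes "principal_reversible_square n M"
  shows "matrix_of_size n M"
    and "{M i j | i j. i \<in> {1..n} \<and> j \<in> {1..n}} = real ` {1..n^2}"
    and "i \<in> {1..n} \<Longrightarrow> j \<in> {1..n} \<Longrightarrow> k \<in> {1..n} \<Longrightarrow> l \<in> {1..n} \<Longrightarrow>
      M i j + M k l = M i l + M k j"
    and "i \<in> {1..n} \<Longrightarrow> j \<in> {1..n} \<Longrightarrow> j' \<in> {1..n} \<Longrightarrow> j < j' \<Longrightarrow> M i j < M i j'"
    and "j \<in> {1..n} \<Longrightarrow> i \<in> {1..n} \<Longrightarrow> i' \<in> {1..n} \<Longrightarrow> i < i' \<Longrightarrow> M i j < M i' j"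
    and "M 1 1 = 1" and "M 1 (idx n 2) = 2"
proof -
  note P = assms[unfolded principal_reversible_square_def reversible_square_def idx_1]
  from P show "matrix_of_size n M" by (elim conjE)
  from P show "{M i j | i j. i \<in> {1..n} \<and> j \<in> {1..n}} = real ` {1..n^2}" by (elim conjE)
  from P show "i \<in> {1..n} \<Longrightarrow> j \<in> {1..n} \<Longrightarrow> k \<in> {1..n} \<Longrightarrow> l \<in> {1..n} \<Longrightarrow>
      M i j + M k l = M i l + M k j" by (elim conjE) blast
  from P show "i \<in> {1..n} \<Longrightarrow> j \<in> {1..n} \<Longrightarrow> j' \<in> {1..n} \<Longrightarrow> j < j' \<Longrightarrow> M i j < M i j'"
    by (elim conjE) blast
  from P show "j \<in> {1..n} \<Longrightarrow> i \<in> {1..n} \<Longrightarrow> i' \<in> {1..n} \<Longrightarrow> i < i' \<Longrightarrow> M i j < M i' j"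
    by (elim conjE) blast
  from P show "M 1 1 = 1" by (elim conjE)
  from P show "M 1 (idx n 2) = 2" by (elim conjE)
qed

lemma principal_square_two_le:
  assumes "principal_reversible_square n M"
  shows "2 \<le> n"
proof -
  have "n \<noteq> 0"
  proof
    assume "n = 0"
    then have "M 1 1 = 0" using principal_squareD(1)[OF assms] by (simp add: matrix_of_size_def)
    then show False using principal_squareD(6)[OF assms] by simp
  qed
  moreover have "n \<noteq> 1"
  proof
    assume "n = 1"
    then have "idx n 2 = 1" by (simp add: idx_def)
    then show False using principal_squareD(6,7)[OF assms] by simp
  qed
  ultimately show ?thesis by linarith
qed

definition sum_square :: "nat \<Rightarrow> (nat \<Rightarrow> nat) \<Rightarrow> (nat \<Rightarrow> nat) \<Rightarrow> nat \<Rightarrow> nat \<Rightarrow> real" where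
  "sum_square n f g i j =
     (if i \<in> {1..n} \<and> j \<in> {1..n} then real (f (i - 1) + g (j - 1) + 1) else 0)"

lemma sum_square_cong:
  assumes "\<And>x. x < n \<Longrightarrow> f x = f' x" "\<And>y. y < n \<Longrightarrow> g y = g' y"
  shows "sum_square n f g = sum_square n f' g'"
  using assms by (auto simp: sum_square_def fun_eq_iff)

lemma reversible_sum_square:
  assumes "\<And>x. x < n \<Longrightarrow> f x + f (n - 1 - x) = f 0 + f (n - 1)"
    and "\<And>y. y < n \<Longrightarrow> g y + g (n - 1 - y) = g 0 + g (n - 1)"
  shows "reversible_square n (sum_square n f g)"
proof -
  let ?M = "sum_square n f g"
  have row: "?M i j + ?M i (n + 1 - j) = real (2 * f (i - 1) + g 0 + g (n - 1) + 2)"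
    if i: "i \<in> {1..n}" and j: "j \<in> {1..n}" for i j
  proof -
    obtain y where "j = Suc y" "y < n" using j by (cases j) auto
    then show ?thesis using i assms(2)[of y] by (simp add: sum_square_def Suc_le_eq)
  qed
  have col: "?M i j + ?M (n + 1 - i) j = real (f 0 + f (n - 1) + 2 * g (j - 1) + 2)"
    if i: "i \<in> {1..n}" and j: "j \<in> {1..n}" for i j
  proof -
    obtain x where "i = Suc x" "x < n" using i by (cases i) auto
    then show ?thesis using j assms(1)[of x] by (simp add: sum_square_def Suc_le_eq)
  qed
  have "?M i j + ?M k l = ?M i l + ?M k j"
    if "i \<in> {1..n}" "j \<in> {1..n}" "k \<in> {1..n}" "l \<in> {1..n}" for i j k l
    using that by (simp add: sum_square_def)
  moreover have "matrix_of_size n ?M" by (simp add: matrix_of_size_def sum_square_def)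
  ultimately show ?thesis unfolding reversible_square_def using row col by simp
qed

lemma sum_square_entries:
  "{sum_square n f g i j | i j. i \<in> {1..n} \<and> j \<in> {1..n}} =
     (\<lambda>k. real (Suc k)) ` (\<lambda>(x, y). f x + g y) ` ({..<n} \<times> {..<n})"
proof (intro equalityI subsetI)
  fix v assume "v \<in> {sum_square n f g i j | i j. i \<in> {1..n} \<and> j \<in> {1..n}}"
  then obtain i j where "i \<in> {1..n}" "j \<in> {1..n}" "v = sum_square n f g i j" by blast
  then have "(i - 1, j - 1) \<in> {..<n} \<times> {..<n}" "v = real (Suc (f (i - 1) + g (j - 1)))"
    by (auto simp: sum_square_def)
  then show "v \<in> (\<lambda>k. real (Suc k)) ` (\<lambda>(x, y). f x + g y) ` ({..<n} \<times> {..<n})"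
    by (metis (no_types, lifting) case_prod_conv image_eqI)
next
  fix v assume "v \<in> (\<lambda>k. real (Suc k)) ` (\<lambda>(x, y). f x + g y) ` ({..<n} \<times> {..<n})"
  then obtain x y where "x < n" "y < n" "v = real (Suc (f x + g y))" by auto
  then have "Suc x \<in> {1..n}" "Suc y \<in> {1..n}" "v = sum_square n f g (Suc x) (Suc y)"
    by (auto simp: sum_square_def)
  then show "v \<in> {sum_square n f g i j | i j. i \<in> {1..n} \<and> j \<in> {1..n}}" by blast
qed

lemma sum_square_entries_iff_bij:
  "{sum_square n f g i j | i j. i \<in> {1..n} \<and> j \<in> {1..n}} = real ` {1..n^2} \<longleftrightarrow>
     bij_betw (\<lambda>(x, y). f x + g y) ({..<n} \<times> {..<n}) {..<n^2}"
proof -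
  let ?S = "(\<lambda>(x, y). f x + g y) ` ({..<n} \<times> {..<n})"
  have entry_range: "real ` {1..n^2} = (\<lambda>k. real (Suc k)) ` {..<n^2}"
    unfolding image_Suc_lessThan[symmetric] image_image ..
  have "inj (\<lambda>k. real (Suc k))" by (simp add: inj_def)
  then have "{sum_square n f g i j | i j. i \<in> {1..n} \<and> j \<in> {1..n}} = real ` {1..n^2}
      \<longleftrightarrow> ?S = {..<n^2}"
    unfolding sum_square_entries entry_range by (rule inj_image_eq_iff)
  also have "\<dots> \<longleftrightarrow> bij_betw (\<lambda>(x, y). f x + g y) ({..<n} \<times> {..<n}) {..<n^2}"
  proof
    assume "?S = {..<n^2}"
    then have "card ?S = card ({..<n} \<times> {..<n})"
      by (simp add: card_cartesian_product power2_eq_square)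
    then show "bij_betw (\<lambda>(x, y). f x + g y) ({..<n} \<times> {..<n}) {..<n^2}"
      using \<open>?S = {..<n^2}\<close> by (simp add: bij_betw_def inj_on_iff_eq_card)
  qed (simp add: bij_betw_def)
  finally show ?thesis .
qed

lemma principal_sum_square:
  assumes "bij_betw (\<lambda>(x, y). f x + g y) ({..<n} \<times> {..<n}) {..<n^2}"
    and "strict_mono_on {..<n} f" "strict_mono_on {..<n} g"
    and "\<And>x. x < n \<Longrightarrow> f x + f (n - 1 - x) = f 0 + f (n - 1)"
    and "\<And>y. y < n \<Longrightarrow> g y + g (n - 1 - y) = g 0 + g (n - 1)"
    and "f 0 = 0" "g 0 = 0" "g 1 = 1" "2 \<le> n"
  shows "principal_reversible_square n (sum_square n f g)"
  unfolding principal_reversible_square_def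
proof (intro conjI ballI impI)
  show "reversible_square n (sum_square n f g)"
    using reversible_sum_square assms(4,5) by blast
  show "{sum_square n f g i j | i j. i \<in> {1..n} \<and> j \<in> {1..n}} = real ` {1..n^2}"
    using sum_square_entries_iff_bij assms(1) by blast
  fix i j j' assume "i \<in> {1..n}" "j \<in> {1..n}" "j' \<in> {1..n}" "j < j'"
  then show "sum_square n f g i j < sum_square n f g i j'"
    using strict_mono_onD[OF assms(3), of "j - 1" "j' - 1"] by (simp add: sum_square_def)
next
  fix j i i' assume "j \<in> {1..n}" "i \<in> {1..n}" "i' \<in> {1..n}" "i < i'"
  then show "sum_square n f g i j < sum_square n f g i' j"
    using strict_mono_onD[OF assms(2), of "i - 1" "i' - 1"] by (simp add: sum_square_def)
next
  show "sum_square n f g (idx n 1) (idx n 1) = 1" "sum_square n f g (idx n 1) (idx n 2) = 2"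
    unfolding idx_1 idx_2[OF assms(9)] using assms(6-9) by (simp_all add: sum_square_def)
qed

definition spread :: "nat \<Rightarrow> nat \<Rightarrow> nat \<Rightarrow> nat" where
  "spread p k y = y mod p + k * (y div p)"

lemma spread_digits: "r < p \<Longrightarrow> spread p k (r + p * d) = r + k * d"
  by (simp add: spread_def)

lemma spread_strict_mono:
  assumes "0 < p" "p \<le> k"
  shows "strict_mono (spread p k)"
proof (rule strict_monoI)
  fix y y' :: nat assume "y < y'"
  then have "y div p \<le> y' div p" by (simp add: div_le_mono)
  then consider "y div p = y' div p" | "Suc (y div p) \<le> y' div p" by linarith
  then show "spread p k y < spread p k y'"
  proof cases
    case 1
    then have "y div p * p = y' div p * p" by simp
    then have "y mod p < y' mod p"
      using \<open>y < y'\<close> div_mult_mod_eq[of y p] div_mult_mod_eq[of y' p] by linarith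
    then show ?thesis using 1 by (simp add: spread_def)
  next
    case 2
    have "spread p k y < k + k * (y div p)"
      using mod_less_divisor[OF \<open>0 < p\<close>, of y] \<open>p \<le> k\<close> by (simp add: spread_def)
    also have "\<dots> \<le> k * (y' div p)" using mult_le_mono2[OF 2, of k] by simp
    also have "\<dots> \<le> spread p k y'" by (simp add: spread_def)
    finally show ?thesis .
  qed
qed

lemma spread_reverse:
  assumes "0 < p" "y < p * q"
  shows "spread p k y + spread p k (p * q - 1 - y) = spread p k (p * q - 1)"
proof -
  define r d where "r = y mod p" and "d = y div p"
  have "r < p" "y = r + p * d" using \<open>0 < p\<close> by (simp_all add: r_def d_def)
  have "d < q"
    using \<open>y < p * q\<close> \<open>0 < p\<close> by (simp add: d_def div_less_iff_less_mult mult.commute)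
  then obtain e where "q = Suc (d + e)" using less_iff_Suc_add by blast
  then have pq: "p * q = p + p * d + p * e" by (simp add: algebra_simps)
  have rev: "p * q - 1 - y = (p - 1 - r) + p * e" and top: "p * q - 1 = (p - 1) + p * (d + e)"
    using pq \<open>y = r + p * d\<close> \<open>r < p\<close> by (simp_all add: algebra_simps)
  have "spread p k (p * q - 1 - y) = (p - 1 - r) + k * e"
    unfolding rev by (rule spread_digits) (use \<open>0 < p\<close> in linarith)
  moreover have "spread p k (p * q - 1) = (p - 1) + k * (d + e)"
    unfolding top by (rule spread_digits) (use \<open>0 < p\<close> in linarith)
  moreover have "spread p k y = r + k * d" using spread_digits \<open>r < p\<close> \<open>y = r + p * d\<close> by simp
  ultimately show ?thesis using \<open>r < p\<close> by (simp add: algebra_simps)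
qed

lemma spread_image_bij:
  assumes "0 < p" "0 < q"
  defines "n \<equiv> p * q"
  shows "bij_betw (\<lambda>(x, y). p * x + spread p (p * n) y) ({..<n} \<times> {..<n}) {..<n^2}"
proof -
  let ?v = "\<lambda>(x, y). p * x + spread p (p * n) y"
  have "?v (x, y) < n^2" if "x < n" "y < n" for x y
  proof -
    have "y div p < q"
      using that(2) \<open>0 < p\<close> by (simp add: n_def div_less_iff_less_mult mult.commute)
    then have "p * n * Suc (y div p) \<le> p * n * q" by (intro mult_le_mono2) simp
    moreover have "p * x + y mod p < p * n"
    proof -
      have "p * Suc x \<le> p * n" using that(1) by (intro mult_le_mono2) simp
      then show ?thesis using mod_less_divisor[OF \<open>0 < p\<close>, of y] by simp
    qed
    ultimately show ?thesis by (simp add: spread_def n_def power2_eq_square algebra_simps)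
  qed
  then have range: "?v ` ({..<n} \<times> {..<n}) \<subseteq> {..<n^2}" by auto
  have "inj_on ?v ({..<n} \<times> {..<n})"
  proof (rule inj_onI, clarify)
    fix x y x' y' assume "x < n" "y < n" "x' < n" "y' < n"
      and eq: "p * x + spread p (p * n) y = p * x' + spread p (p * n) y'"
    then have "(p * (x + n * (y div p)) + y mod p) mod p =
        (p * (x' + n * (y' div p)) + y' mod p) mod p"
      by (simp add: spread_def algebra_simps)
    then have "y mod p = y' mod p" by simp
    with eq have "p * (x + n * (y div p)) = p * (x' + n * (y' div p))"
      by (simp add: spread_def algebra_simps)
    then have digits: "x + n * (y div p) = x' + n * (y' div p)" using \<open>0 < p\<close> by simp
    then have "(x + n * (y div p)) mod n = (x' + n * (y' div p)) mod n" by simp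
    then have "x = x'" using \<open>x < n\<close> \<open>x' < n\<close> by simp
    moreover have "y div p = y' div p" using digits \<open>x = x'\<close> \<open>x < n\<close> by simp
    ultimately show "x = x' \<and> y = y'" using \<open>y mod p = y' mod p\<close> by (metis div_mult_mod_eq)
  qed
  moreover have "card (?v ` ({..<n} \<times> {..<n})) = card {..<n^2}"
    using card_image[OF calculation] by (simp add: card_cartesian_product power2_eq_square)
  ultimately show ?thesis
    using range card_subset_eq[of "{..<n^2}"] by (simp add: bij_betw_def)
qed

text \<open>In row x and column y = r + p d (counted from 0, with r < p) the entry is r + p (x + n d) + 1,
  so its digits (r, x, d) in the mixed radix (p, n, q) run through all of 0..<n^2.\<close>

definition factor_square :: "nat \<Rightarrow> nat \<Rightarrow> nat \<Rightarrow> nat \<Rightarrow> real" where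
  "factor_square p q = sum_square (p * q) (\<lambda>x. p * x) (spread p (p * (p * q)))"

lemma factor_square_principal:
  assumes "2 \<le> p" "1 \<le> q"
  shows "principal_reversible_square (p * q) (factor_square p q)"
  unfolding factor_square_def
proof (rule principal_sum_square)
  let ?n = "p * q"
  show "bij_betw (\<lambda>(x, y). p * x + spread p (p * ?n) y) ({..<?n} \<times> {..<?n}) {..<?n^2}"
    using spread_image_bij assms by simp
  show "strict_mono_on {..<?n} (\<lambda>x. p * x)"
    using assms by (auto intro: strict_mono_onI)
  show "strict_mono_on {..<?n} (spread p (p * ?n))"
    using strict_monoD[OF spread_strict_mono] assms by (auto intro!: strict_mono_onI)
  show "p * x + p * (?n - 1 - x) = p * 0 + p * (?n - 1)" if "x < ?n" for x
    using that by (simp flip: distrib_left)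
  show "spread p (p * ?n) y + spread p (p * ?n) (?n - 1 - y) =
      spread p (p * ?n) 0 + spread p (p * ?n) (?n - 1)" if "y < ?n" for y
    using spread_reverse[OF _ that] assms by (simp add: spread_def)
  show "p * 0 = 0" "spread p (p * ?n) 0 = 0" "spread p (p * ?n) 1 = 1"
    using assms by (simp_all add: spread_def)
  show "2 \<le> ?n" using mult_le_mono[OF assms] by simp
qed

lemma factor_square_ne:
  assumes "2 \<le> p" "2 \<le> q"
  shows "factor_square p q \<noteq> factor_square (p * q) 1"
proof -
  let ?n = "p * q"
  have "p * 1 < p * q" using assms by (intro mult_less_mono2) simp_all
  then have "p < ?n" by simp
  then have "Suc p \<le> ?n" by linarith
  then have "factor_square p q 1 (Suc p) = real (p * ?n + 1)"
    "factor_square ?n 1 1 (Suc p) = real (p + 1)"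
    using assms by (simp_all add: factor_square_def sum_square_def spread_def)
  moreover have "p * ?n \<noteq> p" using assms by simp
  ultimately show ?thesis by (metis of_nat_eq_iff add_right_cancel)
qed

lemma principal_square_eq_sum_square:
  assumes "principal_reversible_square n M"
  obtains f g where "M = sum_square n f g"
    and "bij_betw (\<lambda>(x, y). f x + g y) ({..<n} \<times> {..<n}) {..<n^2}"
    and "strict_mono_on {..<n} f" "strict_mono_on {..<n} g" "g 1 = 1"
proof -
  note square = principal_squareD[OF assms]
  have "2 \<le> n" using principal_square_two_le[OF assms] .
  have one: "1 \<in> {1..n}" and M12: "M 1 2 = 2"
    using square(7) \<open>2 \<le> n\<close> by (simp_all add: idx_2)
  have nat_entry: "\<exists>k. 1 \<le> k \<and> M i j = real k" if "i \<in> {1..n}" "j \<in> {1..n}" for i j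
  proof -
    have "M i j \<in> real ` {1..n^2}" using square(2) that by blast
    then show ?thesis by auto
  qed
  define f where "f x = nat \<lfloor>M (Suc x) 1\<rfloor> - 1" for x
  define g where "g y = nat \<lfloor>M 1 (Suc y)\<rfloor> - 1" for y
  have f: "real (f x) = M (Suc x) 1 - 1" if "x < n" for x
    using nat_entry[of "Suc x" 1] that \<open>2 \<le> n\<close> by (auto simp: f_def)
  have g: "real (g y) = M 1 (Suc y) - 1" if "y < n" for y
    using nat_entry[of 1 "Suc y"] that \<open>2 \<le> n\<close> by (auto simp: g_def)
  have M_eq: "M = sum_square n f g"
  proof (intro ext)
    fix i j
    show "M i j = sum_square n f g i j"
    proof (cases "i \<in> {1..n} \<and> j \<in> {1..n}")
      case True
      then obtain x y where "i = Suc x" "j = Suc y" "x < n" "y < n"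
        using True by (cases i; cases j) auto
      moreover have "M i j + M 1 1 = M i 1 + M 1 j" using square(3) True one by blast
      ultimately show ?thesis using f g square(6) by (simp add: sum_square_def)
    next
      case False
      then show ?thesis using square(1) by (auto simp: matrix_of_size_def sum_square_def)
    qed
  qed
  show thesis
  proof (rule that[OF M_eq])
    show "bij_betw (\<lambda>(x, y). f x + g y) ({..<n} \<times> {..<n}) {..<n^2}"
      using square(2) unfolding M_eq sum_square_entries_iff_bij .
    show "strict_mono_on {..<n} f"
    proof (rule strict_mono_onI)
      fix x x' assume "x \<in> {..<n}" "x' \<in> {..<n}" "x < x'"
      then have "M (Suc x) 1 < M (Suc x') 1" using square(5) one by simp
      then have "real (f x) < real (f x')" using f \<open>x \<in> {..<n}\<close> \<open>x' \<in> {..<n}\<close> by simp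
      then show "f x < f x'" by simp
    qed
    show "strict_mono_on {..<n} g"
    proof (rule strict_mono_onI)
      fix y y' assume "y \<in> {..<n}" "y' \<in> {..<n}" "y < y'"
      then have "M 1 (Suc y) < M 1 (Suc y')" using square(4) one by simp
      then have "real (g y) < real (g y')" using g \<open>y \<in> {..<n}\<close> \<open>y' \<in> {..<n}\<close> by simp
      then show "g y < g y'" by simp
    qed
    show "g 1 = 1" using g[of 1] M12 \<open>2 \<le> n\<close> by (simp add: numeral_2_eq_2)
  qed
qed

lemma principal_square_prime_unique:
  assumes "prime n" "principal_reversible_square n M"
  shows "M = factor_square n 1"
proof -
  obtain f g where M: "M = sum_square n f g"
    and bij: "bij_betw (\<lambda>(x, y). f x + g y) ({..<n} \<times> {..<n}) {..<n^2}"
    and mono: "strict_mono_on {..<n} f" "strict_mono_on {..<n} g" and "g 1 = 1"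
    using principal_square_eq_sum_square[OF assms(2)] .
  have "2 \<le> n" using prime_ge_2_nat[OF assms(1)] .
  have inj: "inj_on f {..<n}" "inj_on g {..<n}"
    using mono by (simp_all add: strict_mono_on_imp_inj_on)
  interpret interval_tiling "f ` {..<n}" "g ` {..<n}" "n^2"
    using interval_tiling_image[OF bij inj] \<open>2 \<le> n\<close> by simp
  have "card (g ` {..<n}) = n" using card_image[OF inj(2)] by simp
  moreover have "1 \<in> g ` {..<n}"
    using \<open>g 1 = 1\<close> \<open>2 \<le> n\<close> by (intro rev_image_eqI[of 1]) simp_all
  moreover have "n < n^2" using \<open>2 \<le> n\<close> by (simp add: power2_eq_square)
  ultimately have B: "g ` {..<n} = {..<n}" and A: "\<And>x. x < n \<Longrightarrow> n dvd f x"
    using prime_card_tiling assms(1) by simp_all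
  have g_id: "g y = y" if "y < n" for y
    using strict_mono_on_lessThan_self[OF mono(2)] B that by simp
  have f_n: "f x = n * x" if "x < n" for x
  proof (rule strict_mono_on_lessThan_multiples[OF mono(1) A _ that])
    show "f y < n * n" if "y < n" for y
      using sum_less[of "f y" 0] zero_mem(2) that by (simp add: power2_eq_square)
  qed
  show ?thesis unfolding M factor_square_def mult_1_right
    using f_n g_id by (intro sum_square_cong) (simp_all add: spread_def)
qed

theorem corollary3:
  fixes n :: nat
  shows "card {M. principal_reversible_square n M} = 1 \<longleftrightarrow> prime n"
proof
  assume "card {M. principal_reversible_square n M} = 1"
  then obtain M where M: "{M. principal_reversible_square n M} = {M}"
    by (rule card_1_singletonE)
  then have "2 \<le> n" using principal_square_two_le by blast
  show "prime n"
  proof (rule ccontr)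
    assume "\<not> prime n"
    obtain p q where "n = p * q" "2 \<le> p" "2 \<le> q"
      using \<open>2 \<le> n\<close> \<open>\<not> prime n\<close> by (rule composite_nat_factors)
    then have "factor_square p q \<in> {M. principal_reversible_square n M}"
      "factor_square n 1 \<in> {M. principal_reversible_square n M}"
      using factor_square_principal[of p q] factor_square_principal[of n 1] \<open>2 \<le> n\<close> by simp_all
    then have "factor_square p q = factor_square n 1" unfolding M by simp
    then show False using factor_square_ne[OF \<open>2 \<le> p\<close> \<open>2 \<le> q\<close>] \<open>n = p * q\<close> by simp
  qed
next
  assume "prime n"
  then have "principal_reversible_square n (factor_square n 1)"
    using factor_square_principal[of n 1] prime_ge_2_nat by simp
  then have "{M. principal_reversible_square n M} = {factor_square n 1}"
    using principal_square_prime_unique[OF \<open>prime n\<close>] by blast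
  then show "card {M. principal_reversible_square n M} = 1" by simp
qed

end
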